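(* Let $n\ge 1$ be an integer, let $\alpha\in[0,1)$, and let $\overrightarrow{P_n}$ be the directed path with vertex set $\{v_1,\dots,v_n\}$ and arc set $\{(v_1,v_2),(v_2,v_3),\dots,(v_{n-1},v_n)\}$. Then the singular values of $A_{\alpha}(\overrightarrow{P_n})$ are, as a multiset, $0$ (with multiplicity $1$) together with $$\sqrt{2\alpha^2-2\alpha+1+2\alpha(1-\alpha)\cos\frac{j\pi}{n}},\qquad j=1,2,\dots,n-1.$$
   Context: Digraphs are simple: a finite vertex set and a set of arcs, which are ordered pairs of distinct vertices, with no parallel arcs (a pair of opposite arcs $(u,v),(v,u)$ is allowed). For a digraph $D$ on vertices $v_1,\dots,v_n$, the adjacency matrix $A(D)=(a_{ij})$ has $a_{ij}=1$ if $(v_i,v_j)$ is an arc and $0$ otherwise; $d_i^+$ is the outdegree of $v_i$ (number of arcs with tail $v_i$), and $\Delta^+(D)=\mathrm{diag}(d_1^+,\dots,d_n^+)$. For $\alpha\in[0,1)$, $A_\alpha(D)=\alpha\Delta^+(D)+(1-\alpha)A(D)$. The singular values of a real square matrix $B$ are the nonnegative square roots of the eigenvalues of $BB^{T}$, counted with multiplicity. *)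

theory Defs
  imports "Jordan_Normal_Form.Matrix" "Jordan_Normal_Form.Char_Poly"
begin

text \<open>A digraph on the vertex set v_0,...,v_(n-1) (indices 0..n-1) given by its arc set.\<close>

definition adj_matrix :: "nat \<Rightarrow> (nat \<times> nat) set \<Rightarrow> real mat" where
  "adj_matrix n E = mat n n (\<lambda>(i,j). if (i,j) \<in> E then 1 else 0)"

definition outdeg :: "nat \<Rightarrow> (nat \<times> nat) set \<Rightarrow> nat \<Rightarrow> nat" where
  "outdeg n E i = card {j. j < n \<and> (i,j) \<in> E}"

definition outdeg_matrix :: "nat \<Rightarrow> (nat \<times> nat) set \<Rightarrow> real mat" where
  "outdeg_matrix n E = mat n n (\<lambda>(i,j). if i = j then real (outdeg n E i) else 0)"

definition A_alpha :: "real \<Rightarrow> nat \<Rightarrow> (nat \<times> nat) set \<Rightarrow> real mat" where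
  "A_alpha \<alpha> n E = \<alpha> \<cdot>\<^sub>m outdeg_matrix n E + (1 - \<alpha>) \<cdot>\<^sub>m adj_matrix n E"

definition dipath_arcs :: "nat \<Rightarrow> (nat \<times> nat) set" where
  "dipath_arcs n = {(i, i + 1) | i. i + 1 < n}"

text \<open>For the real symmetric matrix B B^T the characteristic polynomial splits over the reals,
  so its real roots (with multiplicity) are all its eigenvalues.\<close>
definition singular_values :: "real mat \<Rightarrow> real multiset" where
  "singular_values B = image_mset sqrt (proots (char_poly (B * transpose_mat B)))"

end

theory Submission
  imports Defs
begin

text \<open>The Gram matrix \<open>B = A A\<^sup>T\<close> of the path matrix \<open>A\<close> is tridiagonal with off-diagonal
  entries \<open>\<alpha>(1 - \<alpha>)\<close>. Hence for \<open>t = j\<pi>/n\<close>, \<open>1 \<le> j < n\<close>, the sine vector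
  \<open>v\<^sub>i = sin ((i + 1) t)\<close> is an eigenvector with eigenvalue \<open>\<alpha>\<^sup>2 + (1 - \<alpha>)\<^sup>2 + 2\<alpha>(1 - \<alpha>) cos t\<close>:
  the identity \<open>sin (x - t) + sin (x + t) = 2 cos t sin x\<close> handles the interior rows and
  \<open>sin 0 = sin (n t) = 0\<close> the boundary rows. The last unit vector lies in the kernel of \<open>A\<^sup>T\<close>,
  giving the eigenvalue 0. For \<open>0 < \<alpha> < 1\<close> these \<open>n\<close> values are distinct, hence they are
  exactly the roots of the degree-\<open>n\<close> characteristic polynomial; for \<open>\<alpha> = 0\<close> the matrix \<open>B\<close>
  is \<open>diag (1, \<dots>, 1, 0)\<close>.\<close>

lemma sin_diff_plus_sin_add: "sin (x - t) + sin (x + t) = 2 * cos t * sin (x :: real)"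
  by (simp add: sin_add sin_diff)

lemma multiple_pi_div_le_pi:
  assumes "j \<le> n"
  shows "real j * pi / real n \<le> pi"
proof (cases "n = 0")
  case False
  then have "real j / real n \<le> 1"
    using assms by simp
  then show ?thesis
    using mult_right_mono[of "real j / real n" 1 pi] by simp
qed simp

lemma inj_on_cos_multiples_pi: "inj_on (\<lambda>j. cos (real j * pi / real n)) {..n}"
proof (rule inj_onI)
  fix j k
  assume j: "j \<in> {..n}" and k: "k \<in> {..n}"
    and cos_eq: "cos (real j * pi / real n) = cos (real k * pi / real n)"
  have "real j * pi / real n = real k * pi / real n"
    by (rule cos_inj_pi[OF _ _ _ _ cos_eq]) (use j k multiple_pi_div_le_pi in auto)
  then show "j = k"
    using j k by (cases "n = 0") auto
qed

lemma cos_multiple_pi_gt_minus_one: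
  assumes "j < n"
  shows "-1 < cos (real j * pi / real n)"
proof -
  have "real j * pi / real n < pi"
    using assms by (simp add: field_simps)
  then show ?thesis
    using cos_mono_less_eq[of pi "real j * pi / real n"] by simp
qed

lemma char_poly_root_if_eigenvector:
  fixes B :: "'a :: field mat"
  assumes "B \<in> carrier_mat n n" "v \<in> carrier_vec n" "v \<noteq> 0\<^sub>v n" "B *\<^sub>v v = l \<cdot>\<^sub>v v"
  shows "poly (char_poly B) l = 0"
  using assms eigenvalue_root_char_poly unfolding eigenvalue_def eigenvector_def by blast

lemma proots_eq_mset_if_distinct_roots:
  fixes p :: "'a :: idom poly"
  assumes "p \<noteq> 0" "distinct xs" "\<And>x. x \<in> set xs \<Longrightarrow> poly p x = 0" "degree p \<le> length xs"
  shows "proots p = mset xs"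
proof -
  have "mset xs \<subseteq># proots p"
  proof (rule mset_subset_eqI)
    fix x
    show "count (mset xs) x \<le> count (proots p) x"
    proof (cases "x \<in> set xs")
      case True
      then have "x \<in># proots p"
        using assms(1,3) by simp
      then show ?thesis
        using assms(2) by (simp add: distinct_count_atmost_1 Suc_le_eq)
    qed (metis count_eq_zero_iff set_mset_mset zero_le)
  qed
  moreover have "size (proots p) \<le> size (mset xs)"
    using size_proots_le[of p] assms(4) by simp
  ultimately show ?thesis
    by (metis mset_subset_size subset_mset.le_less leD)
qed

lemma proots_prod_linear_factors: "proots (\<Prod>a\<leftarrow>xs. [:- a, 1:]) = mset (xs :: 'a :: idom list)"
proof (induction xs)
  case (Cons a xs)
  have "(\<Prod>a\<leftarrow>xs. [:- a, 1:]) \<noteq> 0"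
    by (auto simp: prod_list_zero_iff)
  then have "proots ([:- a, 1:] * (\<Prod>a\<leftarrow>xs. [:- a, 1:])) = proots [:- a, 1:] + proots (\<Prod>a\<leftarrow>xs. [:- a, 1:])"
    by (intro proots_mult) auto
  then show ?case
    using Cons.IH by simp
qed simp

abbreviation path_matrix :: "real \<Rightarrow> nat \<Rightarrow> real mat" where
  "path_matrix \<alpha> n \<equiv> A_alpha \<alpha> n (dipath_arcs n)"

abbreviation path_gram :: "real \<Rightarrow> nat \<Rightarrow> real mat" where
  "path_gram \<alpha> n \<equiv> path_matrix \<alpha> n * transpose_mat (path_matrix \<alpha> n)"

definition path_gram_eigenvalue :: "real \<Rightarrow> nat \<Rightarrow> nat \<Rightarrow> real" where
  "path_gram_eigenvalue \<alpha> n j = 2 * \<alpha>^2 - 2 * \<alpha> + 1 + 2 * \<alpha> * (1 - \<alpha>) * cos (real j * pi / real n)"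

lemma mem_dipath_arcs: "(i, j) \<in> dipath_arcs n \<longleftrightarrow> j = Suc i \<and> Suc i < n"
  unfolding dipath_arcs_def by auto

lemma outdeg_dipath_arcs: "outdeg n (dipath_arcs n) i = (if Suc i < n then 1 else 0)"
proof -
  have "{j. j < n \<and> (i, j) \<in> dipath_arcs n} = (if Suc i < n then {Suc i} else {})"
    by (auto simp: mem_dipath_arcs)
  then show ?thesis
    unfolding outdeg_def by simp
qed

lemma path_matrix_carrier: "path_matrix \<alpha> n \<in> carrier_mat n n"
  unfolding A_alpha_def outdeg_matrix_def adj_matrix_def by simp

lemma path_matrix_index:
  assumes "i < n" "k < n"
  shows "path_matrix \<alpha> n $$ (i, k) =
    (if k = i \<and> Suc i < n then \<alpha> else 0) + (if k = Suc i then 1 - \<alpha> else 0)"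
  using assms unfolding A_alpha_def outdeg_matrix_def adj_matrix_def
  by (auto simp: outdeg_dipath_arcs mem_dipath_arcs)

lemma path_matrix_mult_vec:
  assumes "i < n" "w \<in> carrier_vec n"
  shows "(path_matrix \<alpha> n *\<^sub>v w) $ i =
    (if Suc i < n then \<alpha> * w $ i + (1 - \<alpha>) * w $ Suc i else 0)"
proof -
  have "(path_matrix \<alpha> n *\<^sub>v w) $ i = (\<Sum>k<n. path_matrix \<alpha> n $$ (i, k) * w $ k)"
    using assms path_matrix_carrier[of \<alpha> n] by (auto simp: scalar_prod_def lessThan_atLeast0)
  also have "\<dots> = (\<Sum>k<n. (if k = i \<and> Suc i < n then \<alpha> * w $ k else 0)
      + (if k = Suc i then (1 - \<alpha>) * w $ k else 0))"
    by (rule sum.cong) (auto simp: path_matrix_index assms)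
  also have "\<dots> = (if Suc i < n then \<alpha> * w $ i + (1 - \<alpha>) * w $ Suc i else 0)"
    using assms by (simp add: sum.distrib)
  finally show ?thesis .
qed

lemma transpose_path_matrix_mult_vec:
  assumes "k < n" "w \<in> carrier_vec n"
  shows "(transpose_mat (path_matrix \<alpha> n) *\<^sub>v w) $ k =
    (if Suc k < n then \<alpha> * w $ k else 0) + (if 0 < k then (1 - \<alpha>) * w $ (k - 1) else 0)"
proof -
  have "(transpose_mat (path_matrix \<alpha> n) *\<^sub>v w) $ k = (\<Sum>i<n. path_matrix \<alpha> n $$ (i, k) * w $ i)"
    using assms path_matrix_carrier[of \<alpha> n] by (auto simp: scalar_prod_def lessThan_atLeast0)
  also have "\<dots> = (\<Sum>i<n. (if i = k \<and> Suc k < n then \<alpha> * w $ i else 0)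
      + (if i = k - 1 \<and> 0 < k then (1 - \<alpha>) * w $ i else 0))"
    by (rule sum.cong) (auto simp: path_matrix_index assms)
  also have "\<dots> = (if Suc k < n then \<alpha> * w $ k else 0) + (if 0 < k then (1 - \<alpha>) * w $ (k - 1) else 0)"
    using assms by (simp add: sum.distrib)
  finally show ?thesis .
qed

lemma path_gram_carrier: "path_gram \<alpha> n \<in> carrier_mat n n"
  using path_matrix_carrier[of \<alpha> n] by simp

lemma path_gram_mult_vec:
  assumes "v \<in> carrier_vec n"
  shows "path_gram \<alpha> n *\<^sub>v v = path_matrix \<alpha> n *\<^sub>v (transpose_mat (path_matrix \<alpha> n) *\<^sub>v v)"
  using assms path_matrix_carrier[of \<alpha> n] by (simp add: assoc_mult_mat_vec[of _ n n _ n])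

lemma transpose_path_matrix_mult_sine_vec:
  assumes "sin (real n * t) = 0"
  shows "transpose_mat (path_matrix \<alpha> n) *\<^sub>v vec n (\<lambda>i. sin (real (Suc i) * t)) =
    vec n (\<lambda>k. \<alpha> * sin (real (Suc k) * t) + (1 - \<alpha>) * sin (real k * t))"
proof (rule eq_vecI)
  fix k
  assume "k < dim_vec (vec n (\<lambda>k. \<alpha> * sin (real (Suc k) * t) + (1 - \<alpha>) * sin (real k * t)))"
  then have k: "k < n"
    by simp
  have "sin (real (Suc k) * t) = 0" if "\<not> Suc k < n"
    using that k assms by (metis Suc_lessI)
  then show "(transpose_mat (path_matrix \<alpha> n) *\<^sub>v vec n (\<lambda>i. sin (real (Suc i) * t))) $ k =
      vec n (\<lambda>k. \<alpha> * sin (real (Suc k) * t) + (1 - \<alpha>) * sin (real k * t)) $ k"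
    using k transpose_path_matrix_mult_vec[OF k, of "vec n (\<lambda>i. sin (real (Suc i) * t))" \<alpha>]
    by (cases k) auto
qed (use path_matrix_carrier[of \<alpha> n] in simp)

lemma path_gram_mult_sine_vec:
  assumes "sin (real n * t) = 0"
  defines "v \<equiv> vec n (\<lambda>i. sin (real (Suc i) * t))"
  shows "path_gram \<alpha> n *\<^sub>v v = (2 * \<alpha>^2 - 2 * \<alpha> + 1 + 2 * \<alpha> * (1 - \<alpha>) * cos t) \<cdot>\<^sub>v v"
proof (rule eq_vecI)
  let ?A = "path_matrix \<alpha> n"
  define s where "s k = sin (real k * t)" for k
  define w where "w = transpose_mat ?A *\<^sub>v v"
  have w: "w \<in> carrier_vec n"
    unfolding w_def v_def using path_matrix_carrier[of \<alpha> n] by simp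
  have w_index: "w $ k = \<alpha> * s (Suc k) + (1 - \<alpha>) * s k" if "k < n" for k
    using that transpose_path_matrix_mult_sine_vec[OF assms(1), of \<alpha>]
    unfolding w_def v_def s_def by simp
  have s_rec: "s k + s (Suc (Suc k)) = 2 * cos t * s (Suc k)" for k
    using sin_diff_plus_sin_add[of "(real k + 1) * t" t] unfolding s_def
    by (simp add: algebra_simps)
  fix i
  assume "i < dim_vec ((2 * \<alpha>^2 - 2 * \<alpha> + 1 + 2 * \<alpha> * (1 - \<alpha>) * cos t) \<cdot>\<^sub>v v)"
  then have i: "i < n"
    unfolding v_def by simp
  show "(path_gram \<alpha> n *\<^sub>v v) $ i = ((2 * \<alpha>^2 - 2 * \<alpha> + 1 + 2 * \<alpha> * (1 - \<alpha>) * cos t) \<cdot>\<^sub>v v) $ i"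
  proof (cases "Suc i < n")
    case True
    have "(path_gram \<alpha> n *\<^sub>v v) $ i = \<alpha> * w $ i + (1 - \<alpha>) * w $ Suc i"
      using path_gram_mult_vec[of v n \<alpha>] path_matrix_mult_vec[OF i w] True
      unfolding w_def v_def by simp
    also have "\<dots> = (\<alpha>^2 + (1 - \<alpha>)^2) * s (Suc i) + \<alpha> * (1 - \<alpha>) * (s i + s (Suc (Suc i)))"
      unfolding w_index[OF i] w_index[OF True] by (simp add: algebra_simps power2_eq_square)
    also have "\<dots> = (2 * \<alpha>^2 - 2 * \<alpha> + 1 + 2 * \<alpha> * (1 - \<alpha>) * cos t) * s (Suc i)"
      unfolding s_rec by (simp add: algebra_simps power2_eq_square)
    finally show ?thesis
      using i by (simp add: v_def s_def)
  next
    case False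
    then have "sin (real (Suc i) * t) = 0"
      using i assms(1) by (metis Suc_lessI)
    then show ?thesis
      using path_gram_mult_vec[of v n \<alpha>] path_matrix_mult_vec[OF i w] False i
      unfolding w_def v_def by simp
  qed
qed (use path_matrix_carrier[of \<alpha> n] in \<open>simp add: v_def\<close>)

lemma path_gram_char_poly_root_cos:
  assumes "1 \<le> j" "j < n"
  shows "poly (char_poly (path_gram \<alpha> n)) (path_gram_eigenvalue \<alpha> n j) = 0"
proof -
  define t where "t = real j * pi / real n"
  define v where "v = vec n (\<lambda>i. sin (real (Suc i) * t))"
  have v: "v \<in> carrier_vec n"
    unfolding v_def by simp
  have "sin (real n * t) = 0"
    using assms unfolding t_def by (simp add: sin_zero_iff_int2)
  then have "path_gram \<alpha> n *\<^sub>v v = path_gram_eigenvalue \<alpha> n j \<cdot>\<^sub>v v"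
    unfolding v_def path_gram_eigenvalue_def t_def by (rule path_gram_mult_sine_vec)
  moreover have "v \<noteq> 0\<^sub>v n"
  proof -
    have "0 < t" "t < pi"
      using assms unfolding t_def by (auto simp: field_simps)
    then have "v $ 0 \<noteq> 0"
      using assms sin_gt_zero unfolding v_def by force
    then show ?thesis
      using assms by auto
  qed
  ultimately show ?thesis
    using char_poly_root_if_eigenvector[OF path_gram_carrier v] by blast
qed

lemma path_gram_char_poly_root_zero:
  assumes "1 \<le> n"
  shows "poly (char_poly (path_gram \<alpha> n)) 0 = 0"
proof -
  define v :: "real vec" where "v = unit_vec n (n - 1)"
  have v: "v \<in> carrier_vec n"
    unfolding v_def by simp
  have "v $ (n - 1) = 1"
    using assms unfolding v_def by simp
  then have v_nonzero: "v \<noteq> 0\<^sub>v n"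
    using assms by auto
  have "transpose_mat (path_matrix \<alpha> n) *\<^sub>v v = 0\<^sub>v n"
  proof (rule eq_vecI)
    fix k
    assume "k < dim_vec (0\<^sub>v n :: real vec)"
    then have "k < n"
      by simp
    have "(transpose_mat (path_matrix \<alpha> n) *\<^sub>v v) $ k =
        (if Suc k < n then \<alpha> * v $ k else 0) + (if 0 < k then (1 - \<alpha>) * v $ (k - 1) else 0)"
      by (rule transpose_path_matrix_mult_vec[OF \<open>k < n\<close> v])
    also have "\<dots> = 0"
      using \<open>k < n\<close> by (auto simp: v_def)
    finally show "(transpose_mat (path_matrix \<alpha> n) *\<^sub>v v) $ k = 0\<^sub>v n $ k"
      using \<open>k < n\<close> by simp
  qed (use path_matrix_carrier[of \<alpha> n] in simp)
  then have "path_gram \<alpha> n *\<^sub>v v = 0 \<cdot>\<^sub>v v"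
    using path_gram_mult_vec[OF v] path_matrix_carrier[of \<alpha> n] v by auto
  then show ?thesis
    by (rule char_poly_root_if_eigenvector[OF path_gram_carrier v v_nonzero])
qed

lemma distinct_path_gram_eigenvalues:
  assumes "0 < \<alpha>" "\<alpha> < 1"
  shows "distinct (0 # map (path_gram_eigenvalue \<alpha> n) [1..<n])"
proof -
  define f where "f c = 2 * \<alpha>^2 - 2 * \<alpha> + 1 + 2 * \<alpha> * (1 - \<alpha>) * c" for c
  have "0 < \<alpha> * (1 - \<alpha>)"
    using assms by simp
  have f_eq: "f c = (2 * \<alpha> - 1)^2 + 2 * (\<alpha> * (1 - \<alpha>)) * (1 + c)" for c
    unfolding f_def by (simp add: power2_eq_square algebra_simps)
  have f_pos: "0 < f c" if "-1 < c" for c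
    unfolding f_eq using \<open>0 < \<alpha> * (1 - \<alpha>)\<close> that by (intro add_nonneg_pos) simp_all
  have "inj f"
  proof (rule injI)
    fix c d
    assume "f c = f d"
    then have "(\<alpha> * (1 - \<alpha>)) * c = (\<alpha> * (1 - \<alpha>)) * d"
      unfolding f_eq by simp
    then show "c = d"
      using \<open>0 < \<alpha> * (1 - \<alpha>)\<close> by auto
  qed
  have eigenvalue_eq: "path_gram_eigenvalue \<alpha> n = f \<circ> (\<lambda>j. cos (real j * pi / real n))"
    by (simp add: fun_eq_iff path_gram_eigenvalue_def f_def)
  have "inj_on (\<lambda>j. cos (real j * pi / real n)) {1..<n}"
    by (rule inj_on_subset[OF inj_on_cos_multiples_pi]) auto
  then have "inj_on (path_gram_eigenvalue \<alpha> n) {1..<n}"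
    unfolding eigenvalue_eq by (rule comp_inj_on) (rule inj_on_subset[OF \<open>inj f\<close> subset_UNIV])
  moreover have "0 < path_gram_eigenvalue \<alpha> n j" if "j < n" for j
    using f_pos[OF cos_multiple_pi_gt_minus_one[OF that]] eigenvalue_eq by simp
  ultimately show ?thesis
    by (auto simp: distinct_map) (metis less_irrefl)
qed

lemma proots_char_poly_path_gram_interior:
  assumes "1 \<le> n" "0 < \<alpha>" "\<alpha> < 1"
  shows "proots (char_poly (path_gram \<alpha> n)) = mset (0 # map (path_gram_eigenvalue \<alpha> n) [1..<n])"
proof (rule proots_eq_mset_if_distinct_roots)
  have "degree (char_poly (path_gram \<alpha> n)) = n" "coeff (char_poly (path_gram \<alpha> n)) n = 1"
    using degree_monic_char_poly[OF path_gram_carrier] by auto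
  then show "char_poly (path_gram \<alpha> n) \<noteq> 0"
    and "degree (char_poly (path_gram \<alpha> n)) \<le> length (0 # map (path_gram_eigenvalue \<alpha> n) [1..<n])"
    using assms(1) by auto
  show "distinct (0 # map (path_gram_eigenvalue \<alpha> n) [1..<n])"
    using assms(2,3) by (rule distinct_path_gram_eigenvalues)
  show "poly (char_poly (path_gram \<alpha> n)) x = 0"
    if "x \<in> set (0 # map (path_gram_eigenvalue \<alpha> n) [1..<n])" for x
    using that assms(1) path_gram_char_poly_root_zero path_gram_char_poly_root_cos by auto
qed

lemma path_gram_0_index:
  assumes "i < n" "j < n"
  shows "path_gram 0 n $$ (i, j) = (if i = j \<and> Suc i < n then 1 else 0)"
proof -
  have "path_gram 0 n $$ (i, j) = (path_matrix 0 n *\<^sub>v row (path_matrix 0 n) j) $ i"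
    using assms path_matrix_carrier[of 0 n] by simp
  also have "\<dots> = (if Suc i < n
      then 0 * row (path_matrix 0 n) j $ i + (1 - 0) * row (path_matrix 0 n) j $ Suc i else 0)"
    by (rule path_matrix_mult_vec) (use assms path_matrix_carrier[of 0 n] in simp_all)
  finally show ?thesis
    using assms path_matrix_carrier[of 0 n] by (auto simp: path_matrix_index)
qed

lemma proots_char_poly_path_gram_0:
  assumes "1 \<le> n"
  shows "proots (char_poly (path_gram 0 n)) = mset (0 # map (path_gram_eigenvalue 0 n) [1..<n])"
proof -
  have "upper_triangular (path_gram 0 n)"
    using path_gram_carrier[of 0 n]
    by (auto simp: upper_triangular_def path_gram_0_index simp del: index_mult_mat)
  then have "proots (char_poly (path_gram 0 n)) = mset (diag_mat (path_gram 0 n))"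
    using char_poly_upper_triangular[OF path_gram_carrier] proots_prod_linear_factors by metis
  also have "diag_mat (path_gram 0 n) = replicate (n - 1) 1 @ [0]"
    using assms path_gram_carrier[of 0 n]
    by (intro nth_equalityI)
      (auto simp: diag_mat_def path_gram_0_index nth_append simp del: index_mult_mat)
  also have "path_gram_eigenvalue 0 n = (\<lambda>_. 1)"
    by (simp add: fun_eq_iff path_gram_eigenvalue_def)
  ultimately show ?thesis
    by (simp add: map_replicate_const)
qed

lemma proots_char_poly_path_gram:
  assumes "1 \<le> n" "0 \<le> \<alpha>" "\<alpha> < 1"
  shows "proots (char_poly (path_gram \<alpha> n)) = mset (0 # map (path_gram_eigenvalue \<alpha> n) [1..<n])"
  using assms proots_char_poly_path_gram_0 proots_char_poly_path_gram_interior
  by (cases "\<alpha> = 0") auto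

theorem lemma2p1:
  fixes n :: nat and \<alpha> :: real
  assumes "n \<ge> 1" and "0 \<le> \<alpha>" and "\<alpha> < 1"
  shows "singular_values (A_alpha \<alpha> n (dipath_arcs n)) =
    {#0#} + mset (map (\<lambda>j. sqrt (2 * \<alpha>^2 - 2 * \<alpha> + 1 + 2 * \<alpha> * (1 - \<alpha>) * cos (real j * pi / real n)))
                      [1..<n])"
  unfolding singular_values_def proots_char_poly_path_gram[OF assms]
  by (simp add: path_gram_eigenvalue_def image_mset.compositionality o_def)

end
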